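(* Let $q$ be a prime and $k\geq 2$, and let $f$ be a linear Latin hypercube of order $q$ and dimension $k$. Then there is a unique function $R:\mathbb{F}_q^3\to\mathbb{F}_q$ such that for every rectangle $(a,b,c,d)$ (of any two distinct directions) one has $f(a)=R(f(b),f(c),f(d))$.
   Context: A Latin hypercube of order $q$ and dimension $k$ is a function $f:\mathbb{F}_q^k\to\mathbb{F}_q$ such that fixing any $k-1$ arguments gives a bijection in the remaining argument. It is linear if there are permutations $\alpha_0,\alpha_1,\dots,\alpha_k$ of $\mathbb{F}_q$ with $\alpha_0(f(x_1,\dots,x_k))=\alpha_1(x_1)+\cdots+\alpha_k(x_k)$ for all $x$. For distinct $i,j\in\{1,\dots,k\}$, a rectangle of directions $i$ and $j$ is a quadruple $(a,b,c,d)$ of elements of $\mathbb{F}_q^k$ with $a_i=b_i$, $c_i=d_i$, $b_j=c_j$, $d_j=a_j$, and $a_l=b_l=c_l=d_l$ for all $l\notin\{i,j\}$. *)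

theory Defs
  imports "HOL-Analysis.Analysis" "HOL-Computational_Algebra.Primes"
begin

text \<open>The field F_q (q prime) is modelled by a finite field type 'a of prime
cardinality; the index set {1..k} of coordinates by a finite type 'k with CARD('k) = k.\<close>

definition vupd :: "'a ^ 'k \<Rightarrow> 'k \<Rightarrow> 'a \<Rightarrow> 'a ^ 'k" where
  "vupd x i t = (\<chi> l. if l = i then t else x $ l)"

definition latin_hypercube :: "('a ^ 'k \<Rightarrow> 'a) \<Rightarrow> bool" where
  "latin_hypercube f \<longleftrightarrow> (\<forall>x i. bij (\<lambda>t. f (vupd x i t)))"

definition linear_latin_hypercube :: "('a::comm_monoid_add ^ 'k::finite \<Rightarrow> 'a) \<Rightarrow> bool" where
  "linear_latin_hypercube f \<longleftrightarrow> latin_hypercube f \<and>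
     (\<exists>\<alpha>0 (\<alpha> :: 'k \<Rightarrow> 'a \<Rightarrow> 'a). bij \<alpha>0 \<and> (\<forall>i. bij (\<alpha> i)) \<and>
        (\<forall>x. \<alpha>0 (f x) = (\<Sum>i\<in>UNIV. \<alpha> i (x $ i))))"

definition rectangle :: "'k \<Rightarrow> 'k \<Rightarrow> 'a ^ 'k \<Rightarrow> 'a ^ 'k \<Rightarrow> 'a ^ 'k \<Rightarrow> 'a ^ 'k \<Rightarrow> bool" where
  "rectangle i j a b c d \<longleftrightarrow> i \<noteq> j \<and>
     a $ i = b $ i \<and> c $ i = d $ i \<and> b $ j = c $ j \<and> d $ j = a $ j \<and>
     (\<forall>l. l \<noteq> i \<and> l \<noteq> j \<longrightarrow> a $ l = b $ l \<and> b $ l = c $ l \<and> c $ l = d $ l)"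

end

theory Submission
  imports Defs
begin

text \<open>The rule is forced by the Latin property alone: from any point c one can move along
direction i to a point b and along direction j to a point d with prescribed values, and these
complete to a rectangle (a, b, c, d), so every triple (f b, f c, f d) occurs. Existence uses only
linearity: \<alpha>0 \<circ> f is a sum of one-coordinate terms, which cancel in
\<alpha>0 (f a) - \<alpha>0 (f b) + \<alpha>0 (f c) - \<alpha>0 (f d) on every rectangle, so
R x y z = \<alpha>0\<inverse> (\<alpha>0 x - \<alpha>0 y + \<alpha>0 z).\<close>

definition rectangle_rule :: "('a ^ 'k \<Rightarrow> 'a) \<Rightarrow> ('a \<Rightarrow> 'a \<Rightarrow> 'a \<Rightarrow> 'a) \<Rightarrow> bool" where
  "rectangle_rule f R \<longleftrightarrow>
     (\<forall>i j a b c d. rectangle i j a b c d \<longrightarrow> f a = R (f b) (f c) (f d))"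

lemma latin_hypercube_line_surj:
  assumes "latin_hypercube f"
  obtains t where "f (vupd x i t) = y"
  using assms unfolding latin_hypercube_def by (metis bij_pointE)

lemma rectangle_vupd:
  assumes "i \<noteq> j"
  shows "rectangle i j (vupd (vupd c i s) j t) (vupd c i s) c (vupd c j t)"
  using assms unfolding rectangle_def vupd_def by simp

lemma latin_hypercube_rectangle_values:
  fixes f :: "'a ^ 'k::finite \<Rightarrow> 'a"
  assumes "latin_hypercube f" and "i \<noteq> j"
  obtains a b c d where "rectangle i j a b c d" "f b = x" "f c = y" "f d = z"
proof -
  obtain c where c: "f c = y"
    using assms(1) latin_hypercube_line_surj by metis
  obtain s where b: "f (vupd c i s) = x"
    using assms(1) latin_hypercube_line_surj by metis
  obtain t where d: "f (vupd c j t) = z"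
    using assms(1) latin_hypercube_line_surj by metis
  show thesis
    using that[OF rectangle_vupd[OF assms(2)]] b c d .
qed

lemma latin_hypercube_rectangle_rule_unique:
  fixes f :: "'a ^ 'k::finite \<Rightarrow> 'a" and i j :: 'k
  assumes "latin_hypercube f" and "i \<noteq> j"
    and "rectangle_rule f R" and "rectangle_rule f R'"
  shows "R = R'"
proof (intro ext)
  fix x y z
  obtain a b c d where "rectangle i j a b c d" "f b = x" "f c = y" "f d = z"
    using latin_hypercube_rectangle_values[OF assms(1,2)] .
  then show "R x y z = R' x y z"
    using assms(3,4) unfolding rectangle_rule_def by metis
qed

lemma sum_UNIV_remove_two:
  fixes g :: "'k::finite \<Rightarrow> 'a::comm_monoid_add"
  assumes "i \<noteq> j"
  shows "(\<Sum>l\<in>UNIV. g l) = g i + g j + (\<Sum>l\<in>UNIV - {i, j}. g l)"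
proof -
  have "(\<Sum>l\<in>UNIV. g l) = g i + (\<Sum>l\<in>UNIV - {i}. g l)"
    by (simp add: sum.remove)
  also have "(\<Sum>l\<in>UNIV - {i}. g l) = g j + (\<Sum>l\<in>UNIV - {i} - {j}. g l)"
    using assms by (subst sum.remove[of _ j]) auto
  also have "UNIV - {i} - {j} = UNIV - {i, j}" by auto
  finally show ?thesis by (simp add: add.assoc)
qed

lemma rectangle_sum_separable:
  fixes g :: "'k::finite \<Rightarrow> 'a \<Rightarrow> 'b::ab_group_add"
  assumes "rectangle i j a b c d"
  shows "(\<Sum>l\<in>UNIV. g l (a $ l)) =
           (\<Sum>l\<in>UNIV. g l (b $ l)) - (\<Sum>l\<in>UNIV. g l (c $ l)) + (\<Sum>l\<in>UNIV. g l (d $ l))"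
proof -
  from assms have ij: "i \<noteq> j"
    and coords: "a $ i = b $ i" "c $ i = d $ i" "b $ j = c $ j" "d $ j = a $ j"
    and others: "\<And>l. l \<noteq> i \<and> l \<noteq> j \<Longrightarrow> a $ l = b $ l \<and> b $ l = c $ l \<and> c $ l = d $ l"
    unfolding rectangle_def by blast+
  define S where "S = (\<Sum>l\<in>UNIV - {i, j}. g l (a $ l))"
  have "(\<Sum>l\<in>UNIV - {i, j}. g l (x $ l)) = S" if "x \<in> {b, c, d}" for x
    unfolding S_def by (rule sum.cong) (use that others in auto)
  then show ?thesis
    unfolding sum_UNIV_remove_two[OF ij] S_def[symmetric] using coords
    by (simp add: algebra_simps)
qed

lemma linear_representation_rectangle_rule:
  fixes f :: "'a ^ 'k::finite \<Rightarrow> 'a" and \<alpha>0 :: "'a \<Rightarrow> 'b::ab_group_add"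
  assumes "bij \<alpha>0" and "\<And>x. \<alpha>0 (f x) = (\<Sum>l\<in>UNIV. \<alpha> l (x $ l))"
  shows "rectangle_rule f (\<lambda>x y z. inv \<alpha>0 (\<alpha>0 x - \<alpha>0 y + \<alpha>0 z))"
  unfolding rectangle_rule_def
proof (intro allI impI)
  fix i j :: 'k and a b c d :: "'a ^ 'k"
  assume "rectangle i j a b c d"
  then have "\<alpha>0 (f a) = \<alpha>0 (f b) - \<alpha>0 (f c) + \<alpha>0 (f d)"
    unfolding assms(2) by (rule rectangle_sum_separable)
  then show "f a = inv \<alpha>0 (\<alpha>0 (f b) - \<alpha>0 (f c) + \<alpha>0 (f d))"
    by (simp add: bij_inv_eq_iff[OF assms(1)])
qed

lemma linear_latin_hypercube_rectangle_rule:
  fixes f :: "'a::ab_group_add ^ 'k::finite \<Rightarrow> 'a"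
  assumes "linear_latin_hypercube f"
  shows "\<exists>R. rectangle_rule f R"
  using assms linear_representation_rectangle_rule
  unfolding linear_latin_hypercube_def by blast

theorem lemma1:
  fixes f :: "'a::{field,finite} ^ 'k::finite \<Rightarrow> 'a"
  assumes "prime CARD('a)"
    and "CARD('k) \<ge> 2"
    and "linear_latin_hypercube f"
  shows "\<exists>!R :: 'a \<Rightarrow> 'a \<Rightarrow> 'a \<Rightarrow> 'a.
           \<forall>i j a b c d. rectangle i j a b c d \<longrightarrow> f a = R (f b) (f c) (f d)"
proof -
  obtain i j :: 'k where "i \<noteq> j"
    using assms(2) card_le_Suc0_iff_eq[of "UNIV :: 'k set"] by fastforce
  moreover have "latin_hypercube f"
    using assms(3) unfolding linear_latin_hypercube_def by blast
  ultimately have "\<exists>!R. rectangle_rule f R"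
    using linear_latin_hypercube_rectangle_rule[OF assms(3)]
      latin_hypercube_rectangle_rule_unique by blast
  then show ?thesis
    unfolding rectangle_rule_def .
qed

end
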